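(* If $C$ is a self-dual code over $\mathbb{Z}_4+u\mathbb{Z}_4$ generated by a matrix of the form $[I_n\,|\,A]$ (with $A$ an $n\times n$ matrix over $\mathbb{Z}_4+u\mathbb{Z}_4$), then $\mu(C)$ is self-dual over $\mathbb{Z}_4$ and $\alpha(C)$ is self-dual over $\mathbb{F}_2+u\mathbb{F}_2$.
   Context: $\mathbb{Z}_4+u\mathbb{Z}_4$ is the commutative ring of characteristic $4$ with $u^2=0$; $\mathbb{F}_2+u\mathbb{F}_2$ is the commutative ring $\{0,1,u,1+u\}$ of characteristic $2$ with $u^2=0$. A linear code over a ring $R$ is an $R$-submodule of $R^N$; duals are taken with respect to the Euclidean inner product $\sum_i x_iy_i$ in $R$; self-dual means $C=C^\perp$. For $\overline{a},\overline{b}\in\mathbb{Z}_4^N$, $\mu(\overline{a}+u\overline{b})=\overline{a}$; $\alpha$ is coordinatewise reduction modulo $2$ from $\mathbb{Z}_4+u\mathbb{Z}_4$ to $\mathbb{F}_2+u\mathbb{F}_2$. *)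

theory Defs
  imports Main "HOL-Library.Numeral_Type"
begin

text \<open>The ring R + uR with u^2 = 0 (dual numbers over a commutative ring R).
  Dual a b stands for a + u b.  Z4 + uZ4 is 4 dnum, F2 + uF2 is 2 dnum.\<close>

datatype 'a dnum = Dual (re: 'a) (im: 'a)

instantiation dnum :: (comm_ring_1) comm_ring_1
begin
definition "0 = Dual 0 0"
definition "1 = Dual 1 0"
definition "x + y = Dual (re x + re y) (im x + im y)"
definition "x - y = Dual (re x - re y) (im x - im y)"
definition "- x = Dual (- re x) (- im x)"
definition "x * y = Dual (re x * re y) (re x * im y + im x * re y)"
instance
  by standard (auto simp: zero_dnum_def one_dnum_def plus_dnum_def minus_dnum_def
      uminus_dnum_def times_dnum_def algebra_simps intro: dnum.expand)
end

definition vecs :: "nat \<Rightarrow> (nat \<Rightarrow> 'a::zero) set" where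
  "vecs N = {x. \<forall>i\<ge>N. x i = 0}"

definition inner_prod :: "nat \<Rightarrow> (nat \<Rightarrow> 'a::comm_ring_1) \<Rightarrow> (nat \<Rightarrow> 'a) \<Rightarrow> 'a" where
  "inner_prod N x y = (\<Sum>i<N. x i * y i)"

definition dual_code :: "nat \<Rightarrow> (nat \<Rightarrow> 'a::comm_ring_1) set \<Rightarrow> (nat \<Rightarrow> 'a) set" where
  "dual_code N C = {y \<in> vecs N. \<forall>x\<in>C. inner_prod N x y = 0}"

definition self_dual :: "nat \<Rightarrow> (nat \<Rightarrow> 'a::comm_ring_1) set \<Rightarrow> bool" where
  "self_dual N C \<longleftrightarrow> C = dual_code N C"

definition gen_row :: "nat \<Rightarrow> (nat \<Rightarrow> nat \<Rightarrow> 'a::comm_ring_1) \<Rightarrow> nat \<Rightarrow> nat \<Rightarrow> 'a" where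
  "gen_row n A i j = (if j < n then (if j = i then 1 else 0)
                      else if j < 2 * n then A i (j - n) else 0)"

definition gen_code :: "nat \<Rightarrow> (nat \<Rightarrow> nat \<Rightarrow> 'a::comm_ring_1) \<Rightarrow> (nat \<Rightarrow> 'a) set" where
  "gen_code n A = {(\<lambda>j. \<Sum>i<n. c i * gen_row n A i j) | c. True}"

definition mu :: "(nat \<Rightarrow> 4 dnum) \<Rightarrow> (nat \<Rightarrow> 4)" where
  "mu x = (\<lambda>j. re (x j))"

definition red2 :: "4 \<Rightarrow> 2" where
  "red2 a = of_int (Rep_bit0 a)"

definition alpha :: "(nat \<Rightarrow> 4 dnum) \<Rightarrow> (nat \<Rightarrow> 2 dnum)" where
  "alpha x = (\<lambda>j. Dual (red2 (re (x j))) (red2 (im (x j))))"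

end

theory Submission
  imports Defs
begin

text \<open>For a generator matrix [I_n | B] over any commutative ring, a vector y lies in the
  dual code iff y_i + \<Sum>_k B_ik y_(n+k) = 0 for all i < n.  Hence the code is contained in
  its dual iff B B^T = -I, and the dual is contained in the code iff B^T B = -I.  Both are
  polynomial identities in the entries of B, so they are preserved by any ring homomorphism h,
  and a surjective h maps the code of [I_n | B] onto the code of [I_n | h(B)].  Both mu and
  alpha are such homomorphisms applied coordinatewise.\<close>

definition codeword :: "nat \<Rightarrow> (nat \<Rightarrow> nat \<Rightarrow> 'a::comm_ring_1) \<Rightarrow> (nat \<Rightarrow> 'a) \<Rightarrow> nat \<Rightarrow> 'a" where
  "codeword n B c = (\<lambda>j. \<Sum>i<n. c i * gen_row n B i j)"

lemma gen_code_eq_range_codeword: "gen_code n B = range (codeword n B)"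
  by (auto simp: gen_code_def codeword_def)

lemma codeword_lower: "j < n \<Longrightarrow> codeword n B c j = c j"
  by (simp add: codeword_def gen_row_def if_distrib[of "\<lambda>x. _ * x"] cong: if_cong)

lemma codeword_upper: "k < n \<Longrightarrow> codeword n B c (n + k) = (\<Sum>i<n. c i * B i k)"
  by (simp add: codeword_def gen_row_def)

lemma codeword_in_vecs: "codeword n B c \<in> vecs (2 * n)"
  by (simp add: vecs_def codeword_def gen_row_def)

lemma sum_lessThan_add: "(\<Sum>j<n + m. f j) = (\<Sum>j<n. f j) + (\<Sum>k<m. f (n + k))"
  for f :: "nat \<Rightarrow> 'a::comm_monoid_add"
  by (induction m) (simp_all add: add.assoc)

lemma inner_prod_codeword:
  "inner_prod (2 * n) (codeword n B c) y = (\<Sum>i<n. c i * (y i + (\<Sum>k<n. B i k * y (n + k))))"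
proof -
  have "inner_prod (2 * n) (codeword n B c) y
      = (\<Sum>i<n. c i * y i) + (\<Sum>k<n. (\<Sum>i<n. c i * B i k) * y (n + k))"
    by (simp add: inner_prod_def mult_2 sum_lessThan_add codeword_lower codeword_upper)
  also have "(\<Sum>k<n. (\<Sum>i<n. c i * B i k) * y (n + k)) = (\<Sum>i<n. c i * (\<Sum>k<n. B i k * y (n + k)))"
    by (simp add: sum_distrib_left sum_distrib_right mult.assoc) (rule sum.swap)
  finally show ?thesis by (simp add: distrib_left sum.distrib)
qed

lemma mem_dual_gen_code_iff:
  "y \<in> dual_code (2 * n) (gen_code n B) \<longleftrightarrow>
     y \<in> vecs (2 * n) \<and> (\<forall>i<n. y i + (\<Sum>k<n. B i k * y (n + k)) = 0)"
proof -
  have "(\<forall>c. inner_prod (2 * n) (codeword n B c) y = 0) \<longleftrightarrow>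
        (\<forall>i<n. y i + (\<Sum>k<n. B i k * y (n + k)) = 0)"
  proof
    assume orth: "\<forall>c. inner_prod (2 * n) (codeword n B c) y = 0"
    show "\<forall>i<n. y i + (\<Sum>k<n. B i k * y (n + k)) = 0"
    proof (intro allI impI)
      fix i assume "i < n"
      then show "y i + (\<Sum>k<n. B i k * y (n + k)) = 0"
        using orth[rule_format, of "\<lambda>j. of_bool (j = i)"] by (simp add: inner_prod_codeword)
    qed
  qed (simp add: inner_prod_codeword)
  then show ?thesis
    by (auto simp: dual_code_def gen_code_eq_range_codeword)
qed

lemma gen_code_subset_dual_iff:
  "gen_code n B \<subseteq> dual_code (2 * n) (gen_code n B) \<longleftrightarrow>
     (\<forall>i<n. \<forall>k<n. (\<Sum>l<n. B i l * B k l) = - of_bool (i = k))"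
proof
  assume sub: "gen_code n B \<subseteq> dual_code (2 * n) (gen_code n B)"
  show "\<forall>i<n. \<forall>k<n. (\<Sum>l<n. B i l * B k l) = - of_bool (i = k)"
  proof (intro allI impI)
    fix i k assume "i < n" "k < n"
    let ?y = "codeword n B (\<lambda>j. of_bool (j = k))"
    have "?y \<in> dual_code (2 * n) (gen_code n B)"
      using sub by (auto simp: gen_code_eq_range_codeword)
    then have "?y i + (\<Sum>l<n. B i l * ?y (n + l)) = 0"
      using \<open>i < n\<close> by (simp add: mem_dual_gen_code_iff)
    moreover have "(\<Sum>l<n. B i l * ?y (n + l)) = (\<Sum>l<n. B i l * B k l)"
      using \<open>k < n\<close> by (intro sum.cong) (simp_all add: codeword_upper)
    ultimately show "(\<Sum>l<n. B i l * B k l) = - of_bool (i = k)"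
      using \<open>i < n\<close> by (simp add: codeword_lower add_eq_0_iff)
  qed
next
  assume rows: "\<forall>i<n. \<forall>k<n. (\<Sum>l<n. B i l * B k l) = - of_bool (i = k)"
  have "codeword n B c \<in> dual_code (2 * n) (gen_code n B)" for c
  proof -
    have "(\<Sum>k<n. B i k * codeword n B c (n + k)) = - c i" if "i < n" for i
    proof -
      have "(\<Sum>k<n. B i k * codeword n B c (n + k)) = (\<Sum>j<n. c j * (\<Sum>k<n. B i k * B j k))"
        by (simp add: codeword_upper sum_distrib_left mult_ac) (rule sum.swap)
      also have "\<dots> = (\<Sum>j<n. - (c j * of_bool (i = j)))"
        using rows \<open>i < n\<close> by (intro sum.cong) auto
      finally show ?thesis
        using \<open>i < n\<close> by (simp add: sum_negf)
    qed
    then show ?thesis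
      by (simp add: mem_dual_gen_code_iff codeword_in_vecs codeword_lower)
  qed
  then show "gen_code n B \<subseteq> dual_code (2 * n) (gen_code n B)"
    by (auto simp: gen_code_eq_range_codeword)
qed

lemma dual_subset_gen_code_iff:
  "dual_code (2 * n) (gen_code n B) \<subseteq> gen_code n B \<longleftrightarrow>
     (\<forall>k<n. \<forall>l<n. (\<Sum>i<n. B i k * B i l) = - of_bool (k = l))"
proof
  assume sub: "dual_code (2 * n) (gen_code n B) \<subseteq> gen_code n B"
  show "\<forall>k<n. \<forall>l<n. (\<Sum>i<n. B i k * B i l) = - of_bool (k = l)"
  proof (intro allI impI)
    fix k l assume "k < n" "l < n"
    define y where
      "y j = (if j < n then - B j k else if j < 2 * n then of_bool (j = n + k) else 0)" for j
    have "y \<in> dual_code (2 * n) (gen_code n B)"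
      using \<open>k < n\<close> by (simp add: mem_dual_gen_code_iff vecs_def y_def)
    with sub obtain c where c: "y = codeword n B c"
      by (auto simp: gen_code_eq_range_codeword)
    have "c i = - B i k" if "i < n" for i
      using codeword_lower[OF that, of B c] that by (simp add: c[symmetric] y_def)
    then have "y (n + l) = - (\<Sum>i<n. B i k * B i l)"
      using \<open>l < n\<close> by (simp add: c codeword_upper sum_negf[symmetric])
    then show "(\<Sum>i<n. B i k * B i l) = - of_bool (k = l)"
      using \<open>l < n\<close> by (simp add: y_def eq_commute)
  qed
next
  assume cols: "\<forall>k<n. \<forall>l<n. (\<Sum>i<n. B i k * B i l) = - of_bool (k = l)"
  have "y = codeword n B y" if y: "y \<in> dual_code (2 * n) (gen_code n B)" for y
  proof
    fix j
    have y_lower: "y i = - (\<Sum>k<n. B i k * y (n + k))" if "i < n" for i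
      using y that by (simp add: mem_dual_gen_code_iff eq_neg_iff_add_eq_0)
    consider "j < n" | l where "l < n" "j = n + l" | "2 * n \<le> j"
      by (metis add_diff_inverse_nat mult_2 nat_add_left_cancel_less not_less)
    then show "y j = codeword n B y j"
    proof cases
      case 1
      then show ?thesis by (simp add: codeword_lower)
    next
      case (2 l)
      have "codeword n B y j = - (\<Sum>i<n. (\<Sum>k<n. B i k * y (n + k)) * B i l)"
        using 2 y_lower by (simp add: codeword_upper sum_negf)
      also have "\<dots> = - (\<Sum>k<n. y (n + k) * (\<Sum>i<n. B i k * B i l))"
        by (simp add: sum_distrib_left sum_distrib_right mult_ac) (rule sum.swap)
      also have "\<dots> = y j"
        using 2 cols by (simp add: sum_negf)
      finally show ?thesis ..
    next
      case 3
      with y show ?thesis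
        by (simp add: mem_dual_gen_code_iff vecs_def codeword_def gen_row_def)
    qed
  qed
  then show "dual_code (2 * n) (gen_code n B) \<subseteq> gen_code n B"
    by (auto simp: gen_code_eq_range_codeword)
qed

lemma self_dual_gen_code_iff:
  "self_dual (2 * n) (gen_code n B) \<longleftrightarrow>
     (\<forall>i<n. \<forall>k<n. (\<Sum>l<n. B i l * B k l) = - of_bool (i = k)) \<and>
     (\<forall>k<n. \<forall>l<n. (\<Sum>i<n. B i k * B i l) = - of_bool (k = l))"
  unfolding self_dual_def set_eq_subset gen_code_subset_dual_iff dual_subset_gen_code_iff ..

locale surj_ring_hom =
  fixes h :: "'a::comm_ring_1 \<Rightarrow> 'b::comm_ring_1"
  assumes hom_add: "h (x + y) = h x + h y"
    and hom_mult: "h (x * y) = h x * h y"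
    and hom_one: "h 1 = 1"
    and surj: "surj h"
begin

lemma hom_zero: "h 0 = 0"
  using hom_add[of 0 0] by simp

lemma hom_uminus: "h (- x) = - h x"
  using hom_add[of "- x" x] by (simp add: hom_zero eq_neg_iff_add_eq_0)

lemma hom_sum: "h (sum f S) = (\<Sum>x\<in>S. h (f x))"
  by (induction S rule: infinite_finite_induct) (simp_all add: hom_zero hom_add)

lemma hom_of_bool: "h (of_bool P) = of_bool P"
  by (simp add: hom_zero hom_one)

lemma hom_gen_row: "h (gen_row n B i j) = gen_row n (\<lambda>i k. h (B i k)) i j"
  by (simp add: gen_row_def hom_zero hom_one)

lemma hom_codeword:
  "(\<lambda>j. h (codeword n B c j)) = codeword n (\<lambda>i k. h (B i k)) (\<lambda>i. h (c i))"
  by (simp add: codeword_def hom_sum hom_mult hom_gen_row)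

lemma image_gen_code: "(\<lambda>x j. h (x j)) ` gen_code n B = gen_code n (\<lambda>i k. h (B i k))"
proof -
  have lift: "range (\<lambda>c i. h (c i)) = UNIV"
    by (rule surjI[where f = "\<lambda>d i. inv h (d i)"]) (simp add: surj surj_f_inv_f)
  have "(\<lambda>x j. h (x j)) ` range (codeword n B)
      = codeword n (\<lambda>i k. h (B i k)) ` range (\<lambda>c i. h (c i))"
    by (simp add: image_image hom_codeword)
  then show ?thesis
    by (simp add: gen_code_eq_range_codeword lift)
qed

lemma self_dual_image_gen_code:
  assumes "self_dual (2 * n) (gen_code n B)"
  shows "self_dual (2 * n) ((\<lambda>x j. h (x j)) ` gen_code n B)"
proof -
  have "(\<Sum>l<n. h (B i l) * h (B k l)) = h (\<Sum>l<n. B i l * B k l)"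
    and "(\<Sum>j<n. h (B j i) * h (B j k)) = h (\<Sum>j<n. B j i * B j k)" for i k
    by (simp_all add: hom_sum hom_mult)
  with assms show ?thesis
    by (simp add: image_gen_code self_dual_gen_code_iff hom_uminus hom_of_bool)
qed

lemma surj_ring_hom_map_dnum: "surj_ring_hom (map_dnum h)"
proof
  fix x y :: "'a dnum"
  show "map_dnum h (x + y) = map_dnum h x + map_dnum h y"
    by (cases x; cases y) (simp add: plus_dnum_def hom_add)
  show "map_dnum h (x * y) = map_dnum h x * map_dnum h y"
    by (cases x; cases y) (simp add: times_dnum_def hom_add hom_mult)
  show "map_dnum h 1 = 1"
    by (simp add: one_dnum_def hom_one hom_zero)
  show "surj (map_dnum h)"
    by (rule surjI[where f = "map_dnum (inv h)"])
      (simp add: dnum.map_comp surj surj_f_inv_f dnum.map_ident_strong)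
qed

end

interpretation re_dnum: surj_ring_hom "re :: 'a::comm_ring_1 dnum \<Rightarrow> 'a"
proof
  fix x y :: "'a dnum"
  show "re (x + y) = re x + re y" by (simp add: plus_dnum_def)
  show "re (x * y) = re x * re y" by (simp add: times_dnum_def)
  show "re (1 :: 'a dnum) = 1" by (simp add: one_dnum_def)
  show "surj (re :: 'a dnum \<Rightarrow> 'a)" by (rule surjI[where f = "\<lambda>a. Dual a 0"]) simp
qed

lemma of_int_mod_4_eq: "(of_int (z mod 4) :: 2) = of_int z"
proof -
  have "(of_int z :: 2) = of_int (z mod 4) + 4 * of_int (z div 4)"
    by (metis mod_mult_div_eq of_int_add of_int_mult of_int_numeral)
  also have "(4 :: 2) = 0" by simp
  finally show ?thesis by simp
qed

lemma red2_of_int: "red2 (of_int z) = of_int z"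
proof -
  have "Rep_bit0 (of_int z :: 4) = z mod 4"
    using bit0.Rep_Abs_mod[of z, where 'a = 2] by (simp add: bit0.of_int_eq)
  then show ?thesis by (simp add: red2_def of_int_mod_4_eq)
qed

interpretation red2: surj_ring_hom red2
proof
  fix a b :: 4
  show "red2 (a + b) = red2 a + red2 b"
    by (induct a; induct b) (metis of_int_add red2_of_int)
  show "red2 (a * b) = red2 a * red2 b"
    by (induct a; induct b) (metis of_int_mult red2_of_int)
  show "red2 1 = 1"
    by (metis of_int_1 red2_of_int)
  show "surj red2"
    by (metis red2_of_int surj_def bit0.cases)
qed

theorem corollary4p5:
  fixes n :: nat and A :: "nat \<Rightarrow> nat \<Rightarrow> 4 dnum" and C :: "(nat \<Rightarrow> 4 dnum) set"
  assumes "C = gen_code n A"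
    and "self_dual (2 * n) C"
  shows "self_dual (2 * n) (mu ` C) \<and> self_dual (2 * n) (alpha ` C)"
proof
  have mu_eq: "mu = (\<lambda>x j. re (x j))"
    by (simp add: fun_eq_iff mu_def)
  show "self_dual (2 * n) (mu ` C)"
    unfolding mu_eq using re_dnum.self_dual_image_gen_code assms by simp
  have alpha_eq: "alpha = (\<lambda>x j. map_dnum red2 (x j))"
    by (simp add: fun_eq_iff alpha_def dnum.map_sel dnum.expand)
  show "self_dual (2 * n) (alpha ` C)"
    unfolding alpha_eq using surj_ring_hom.self_dual_image_gen_code[OF red2.surj_ring_hom_map_dnum] assms by simp
qed

end
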